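(* There exist absolute constants $q_0$ and $C>0$ such that the following holds. Let $q\geq q_0$ be an integer, let $\Delta\in\mathbb{N}$ with $\Delta\leq\frac{\log q}{\log 2}$, and let $n\geq\Delta q$ be an integer. Let $B:=\frac{1}{n!}\sum_{\pi\in S_n}\binom{c_1(\pi^q)}{\Delta}$. Then: if $\Delta=1$, $B=\sigma_0(q)$; if $\Delta=2$, $\left|B-\frac12\sigma_1(q)\right|\leq C\,\sigma_0(q)^2$; if $\Delta=3$, $\left|B-\frac16\sigma_2(q)\right|\leq C\,\sigma_0(q)\sigma_1(q)$; if $\Delta\geq4$, $\left|B-\frac{1}{\Delta!}\sigma_{\Delta-1}(q)\right|\leq C\,\frac{1}{\Delta!}q^{\Delta-2}\left(\Delta\sigma_0(q)+2^{\Delta}\right)$.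
   Context: For $\pi\in S_n$, $c_1(\pi^q)$ is the number of fixed points of the permutation $\pi^q$. For real $\alpha$, $\sigma_\alpha(q)=\sum_{d\mid q}d^\alpha$. $\mathbb{N}$ denotes the positive integers. *)

theory Defs
  imports "HOL-Analysis.Analysis" "HOL-Combinatorics.Permutations"
begin

definition c1 :: "nat \<Rightarrow> (nat \<Rightarrow> nat) \<Rightarrow> nat" where
  "c1 n p = card {i \<in> {1..n}. p i = i}"

definition sigma :: "real \<Rightarrow> nat \<Rightarrow> real" where
  "sigma \<alpha> q = (\<Sum>d\<in>{d. d dvd q}. real d powr \<alpha>)"

definition Bavg :: "nat \<Rightarrow> nat \<Rightarrow> nat \<Rightarrow> real" where
  "Bavg n q \<Delta> = (\<Sum>\<pi>\<in>{p. p permutes {1..n}}. real (c1 n (\<pi> ^^ q) choose \<Delta>)) / fact n"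

end

theory Submission
  imports Defs "HOL-Combinatorics.Cycles" "HOL-Combinatorics.Orbits"
begin

text \<open>Removing the cycle of \<open>\<pi>\<close> through a fixed point of \<open>\<pi>\<^sup>q\<close> (its length divides \<open>q\<close>) and
  applying Vandermonde's identity expresses \<open>\<Sum>\<^sub>\<pi> (c\<^sub>1(\<pi>\<^sup>q) choose k)\<close> through the same sums over
  smaller symmetric groups. Hence for \<open>n \<ge> kq\<close> the average \<open>B\<close> is a number \<open>B\<^sub>k\<close> depending only
  on \<open>q\<close> and \<open>k\<close>, with \<open>k B\<^sub>k = \<Sum>\<^bsub>d|q\<^esub> \<Sum>\<^sub>j (d - 1 choose j) B\<^bsub>k-1-j\<^esub>\<close>; this gives \<open>B\<^sub>1, B\<^sub>2, B\<^sub>3\<close>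
  explicitly. For \<open>k \<ge> 4\<close>, \<open>k! B\<^sub>k\<close> lies between its \<open>j = k - 1\<close> terms, falling factorials
  \<open>(d - 1) \<cdots> (d - k + 1)\<close>, and a majorant \<open>w\<^sub>k\<close> with \<open>w\<^bsub>k+1\<^esub> = \<Sum>\<^sub>j (k choose j) \<sigma>\<^sub>j(q) w\<^bsub>k-j\<^esub>\<close>.
  Normalised by \<open>q\<^bsup>k-1\<^esup>\<close>, the majorant stays bounded while \<open>2\<^sup>k \<le> q\<close>, because
  \<open>\<sigma>\<^sub>j(q) \<le> 2 q\<^sup>j\<close> for \<open>j \<ge> 2\<close> and \<open>\<sigma>\<^sub>0(q)\<^sup>2 \<le> 4q\<close>. Both bounds agree with \<open>\<sigma>\<^bsub>k-1\<^esub>(q)\<close> up to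
  \<open>O(q\<^bsup>k-2\<^esup> (k \<sigma>\<^sub>0(q) + 2\<^sup>k))\<close>.\<close>

section \<open>Splitting off the cycle through a point\<close>

lemma funpow_cycle_of_list_nth:
  assumes "distinct L" "i < length L"
  shows "(cycle_of_list L ^^ n) (L ! i) = L ! ((n + i) mod length L)"
proof -
  have "map (cycle_of_list L ^^ n) L ! i = rotate n L ! i"
    by (simp only: cyclic_rotation[OF assms(1)])
  then show ?thesis using assms(2) by (simp add: nth_rotate)
qed

lemma funpow_cycle_of_list_fixed_iff:
  assumes "distinct L" "y \<in> set L"
  shows "(cycle_of_list L ^^ n) y = y \<longleftrightarrow> length L dvd n"
proof -
  obtain i where i: "i < length L" "y = L ! i" using assms(2) by (metis in_set_conv_nth)
  have "(cycle_of_list L ^^ n) y = y \<longleftrightarrow> (n + i) mod length L = i"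
    using funpow_cycle_of_list_nth[OF assms(1) i(1)] i
      nth_eq_iff_index_eq[OF assms(1) mod_less_divisor[of "length L" "n + i"] i(1)]
    by (metis length_greater_0_conv list.size(3) not_less_zero)
  also have "\<dots> \<longleftrightarrow> (n + i) mod length L = i mod length L" using i(1) by simp
  also have "\<dots> \<longleftrightarrow> length L dvd n" by (simp add: mod_eq_dvd_iff_nat)
  finally show ?thesis .
qed

lemma funpow_cycle_comp_in_cycle:
  assumes "\<sigma> permutes (A - set L)" "y \<in> set L"
  shows "((cycle_of_list L \<circ> \<sigma>) ^^ n) y = (cycle_of_list L ^^ n) y"
proof (induction n)
  case (Suc n)
  have "(cycle_of_list L ^^ n) y \<in> set L"
    using permutes_funpow[OF cycle_permutes, of n L] assms(2) by (simp add: permutes_in_image)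
  then show ?case using Suc assms(1) by (simp add: permutes_not_in)
qed simp

lemma funpow_cycle_comp_off_cycle:
  assumes "\<sigma> permutes B" "set L \<inter> B = {}" "y \<notin> set L"
  shows "((cycle_of_list L \<circ> \<sigma>) ^^ n) y = (\<sigma> ^^ n) y"
proof -
  have "\<sigma> z \<notin> set L" if "z \<notin> set L" for z
    using assms(1,2) that by (cases "z \<in> B") (auto simp: permutes_in_image permutes_not_in)
  then have off: "(\<sigma> ^^ n) y \<notin> set L" for n
    by (induction n) (use assms(3) in auto)
  show ?thesis
    by (induction n) (simp_all add: off[of "Suc _", simplified] id_outside_supp)
qed

definition cycle_lists :: "'a set \<Rightarrow> 'a \<Rightarrow> 'a list set" where
  "cycle_lists A x = {L. distinct L \<and> set L \<subseteq> A \<and> L \<noteq> [] \<and> hd L = x}"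

definition cycle_splits :: "'a set \<Rightarrow> 'a \<Rightarrow> ('a list \<times> ('a \<Rightarrow> 'a)) set" where
  "cycle_splits A x = (SIGMA L:cycle_lists A x. {\<sigma>. \<sigma> permutes (A - set L)})"

lemma finite_cycle_lists: "finite A \<Longrightarrow> finite (cycle_lists A x)"
  by (rule finite_subset[OF _ finite_lists_length_le[of A "card A"]])
     (auto simp: cycle_lists_def card_mono distinct_card[symmetric])

lemma cycle_comp_permutes:
  assumes "set L \<subseteq> A" "\<sigma> permutes (A - set L)"
  shows "(cycle_of_list L \<circ> \<sigma>) permutes A"
  using permutes_subset[OF cycle_permutes assms(1)] permutes_subset[OF assms(2)]
  by (rule permutes_compose[rotated]) blast

lemma support_cycle_comp:
  assumes "L \<in> cycle_lists A x" "\<sigma> permutes (A - set L)"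
  shows "support (cycle_of_list L \<circ> \<sigma>) x = L"
proof -
  let ?p = "cycle_of_list L \<circ> \<sigma>"
  have d: "distinct L" and ne: "L \<noteq> []" and x: "x = L ! 0"
    using assms(1) by (auto simp: cycle_lists_def hd_conv_nth)
  have xL: "x \<in> set L" using ne x by simp
  have orbit: "(?p ^^ n) x = L ! (n mod length L)" for n
    using funpow_cycle_comp_in_cycle[OF assms(2) xL] funpow_cycle_of_list_nth[OF d, of 0] ne x
    by simp
  have fixed: "(?p ^^ n) x = x \<longleftrightarrow> length L dvd n" for n
    using funpow_cycle_comp_in_cycle[OF assms(2) xL] funpow_cycle_of_list_fixed_iff[OF d xL]
    by simp
  have "least_power ?p x = length L"
    unfolding least_power_def
    by (rule Least_equality) (use fixed ne in \<open>auto intro: dvd_imp_le\<close>)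
  then have "support ?p x = map ((!) L) [0..<length L]"
    by (auto simp: orbit)
  also have "\<dots> = L" by (rule map_nth)
  finally show ?thesis .
qed

lemma perm_restrict_cycle_comp:
  assumes "\<sigma> permutes (A - set L)"
  shows "perm_restrict (cycle_of_list L \<circ> \<sigma>) (A - set L) = \<sigma>"
proof
  fix y
  show "perm_restrict (cycle_of_list L \<circ> \<sigma>) (A - set L) y = \<sigma> y"
  proof (cases "y \<in> A - set L")
    case True
    then have "\<sigma> y \<in> A - set L" using permutes_in_image[OF assms, of y] by blast
    then show ?thesis using True by (simp add: perm_restrict_simps id_outside_supp)
  qed (use assms in \<open>simp add: perm_restrict_simps permutes_not_in\<close>)
qed

lemma cycle_comp_support_restrict:
  assumes "finite A" "x \<in> A" "p permutes A"
  defines "L \<equiv> support p x"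
  shows "L \<in> cycle_lists A x" "perm_restrict p (A - set L) permutes (A - set L)"
    and "cycle_of_list L \<circ> perm_restrict p (A - set L) = p"
proof -
  have pp: "permutation p" using permutes_imp_permutation[OF assms(1,3)] .
  have orbit: "set L = orbit p x"
    unfolding L_def support_set[OF pp] orbit_altdef_permutation[OF pp] by auto
  have "orbit p x \<subseteq> A" by (rule permutes_orbit_subset[OF assms(3,2)])
  moreover have "L \<noteq> [] \<and> hd L = x"
    unfolding L_def using least_power_of_permutation(2)[OF pp] by (simp add: upt_conv_Cons)
  ultimately show "L \<in> cycle_lists A x"
    using cycle_of_permutation[OF pp] orbit by (simp add: cycle_lists_def L_def)
  have cyc: "cyclic_on p (set L)" unfolding orbit by (rule cyclic_on_orbit[OF assms(3,1)])
  show "perm_restrict p (A - set L) permutes (A - set L)"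
    by (rule perm_restrict_diff_cyclic[OF assms(3) cyc])
  have img: "p y \<in> set L \<longleftrightarrow> y \<in> set L" for y
    using cyclic_on_f_in[OF assms(3) cyc] cyclic_on_inI[OF cyc] by blast
  show "cycle_of_list L \<circ> perm_restrict p (A - set L) = p"
  proof
    fix y
    show "(cycle_of_list L \<circ> perm_restrict p (A - set L)) y = p y"
    proof (cases "y \<in> set L")
      case True
      then show ?thesis
        using cycle_restrict[OF pp, of y x] by (simp add: perm_restrict_simps L_def)
    next
      case False
      then show ?thesis using img[of y] assms(3)
        by (cases "y \<in> A") (auto simp: perm_restrict_simps id_outside_supp permutes_not_in)
    qed
  qed
qed

lemma bij_betw_cycle_splits:
  assumes "finite A" "x \<in> A"
  shows "bij_betw (\<lambda>(L, \<sigma>). cycle_of_list L \<circ> \<sigma>) (cycle_splits A x) {p. p permutes A}"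
proof (rule bij_betw_byWitness[where f' = "\<lambda>p. (support p x, perm_restrict p (A - set (support p x)))"])
  show "\<forall>a\<in>cycle_splits A x.
      (\<lambda>p. (support p x, perm_restrict p (A - set (support p x)))) ((\<lambda>(L, \<sigma>). cycle_of_list L \<circ> \<sigma>) a) = a"
  proof
    fix a assume "a \<in> cycle_splits A x"
    then obtain L \<sigma> where "a = (L, \<sigma>)" "L \<in> cycle_lists A x" "\<sigma> permutes (A - set L)"
      by (auto simp: cycle_splits_def)
    then show "(\<lambda>p. (support p x, perm_restrict p (A - set (support p x))))
        ((\<lambda>(L, \<sigma>). cycle_of_list L \<circ> \<sigma>) a) = a"
      using support_cycle_comp[of L A x \<sigma>] perm_restrict_cycle_comp[of \<sigma> A L] by simp
  qed
  show "(\<lambda>(L, \<sigma>). cycle_of_list L \<circ> \<sigma>) ` cycle_splits A x \<subseteq> {p. p permutes A}"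
    by (auto simp: cycle_splits_def cycle_lists_def intro: cycle_comp_permutes)
qed (use cycle_comp_support_restrict[OF assms] in \<open>auto simp: cycle_splits_def\<close>)

section \<open>Fixed points of powers and the limit average\<close>

definition pow_fixes :: "nat \<Rightarrow> 'a set \<Rightarrow> ('a \<Rightarrow> 'a) \<Rightarrow> 'a set" where
  "pow_fixes q A p = {y \<in> A. (p ^^ q) y = y}"

definition pow_fixes_choose_sum :: "nat \<Rightarrow> 'a set \<Rightarrow> nat \<Rightarrow> nat" where
  "pow_fixes_choose_sum q A k = (\<Sum>p\<in>{p. p permutes A}. card (pow_fixes q A p) choose k)"

lemma hd_in_pow_fixes_cycle_comp_iff:
  assumes "L \<in> cycle_lists A x" "\<sigma> permutes (A - set L)"
  shows "x \<in> pow_fixes q A (cycle_of_list L \<circ> \<sigma>) \<longleftrightarrow> length L dvd q"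
proof -
  have d: "distinct L" and x: "x \<in> set L" and LA: "set L \<subseteq> A"
    using assms(1) by (auto simp: cycle_lists_def)
  then show ?thesis
    using funpow_cycle_comp_in_cycle[OF assms(2) x, of q] funpow_cycle_of_list_fixed_iff[OF d x]
    by (auto simp: pow_fixes_def)
qed

lemma card_pow_fixes_cycle_comp:
  assumes "L \<in> cycle_lists A x" "\<sigma> permutes (A - set L)" "length L dvd q" "finite A"
  shows "card (pow_fixes q A (cycle_of_list L \<circ> \<sigma>)) = length L + card (pow_fixes q (A - set L) \<sigma>)"
proof -
  have d: "distinct L" and LA: "set L \<subseteq> A" using assms(1) by (auto simp: cycle_lists_def)
  have "pow_fixes q A (cycle_of_list L \<circ> \<sigma>) = set L \<union> pow_fixes q (A - set L) \<sigma>"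
  proof (rule set_eqI)
    fix y
    show "y \<in> pow_fixes q A (cycle_of_list L \<circ> \<sigma>) \<longleftrightarrow> y \<in> set L \<union> pow_fixes q (A - set L) \<sigma>"
    proof (cases "y \<in> set L")
      case True
      then show ?thesis
        using funpow_cycle_comp_in_cycle[OF assms(2) True, of q]
          funpow_cycle_of_list_fixed_iff[OF d True] assms(3) LA
        by (auto simp: pow_fixes_def)
    next
      case False
      then show ?thesis
        using funpow_cycle_comp_off_cycle[OF assms(2) _ False, of q] by (auto simp: pow_fixes_def)
    qed
  qed
  moreover have "set L \<inter> pow_fixes q (A - set L) \<sigma> = {}" by (auto simp: pow_fixes_def)
  ultimately show ?thesis
    using assms(4) d by (simp add: card_Un_disjoint pow_fixes_def distinct_card)
qed

text \<open>If \<open>L\<close> is the cycle through \<open>x\<close>, then \<open>card (pow_fixes q A p) - 1 = (length L - 1) +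
  card (pow_fixes q (A - set L) \<sigma>)\<close>, which Vandermonde's identity splits.\<close>

lemma sum_pow_fixes_choose_through:
  assumes "finite A" "x \<in> A"
  shows "(\<Sum>p | p permutes A. if x \<in> pow_fixes q A p then card (pow_fixes q A p) - 1 choose k else 0)
    = (\<Sum>L | L \<in> cycle_lists A x \<and> length L dvd q.
         \<Sum>j\<le>k. (length L - 1 choose j) * pow_fixes_choose_sum q (A - set L) (k - j))"
    (is "?lhs = _")
proof -
  define h where "h p = (if x \<in> pow_fixes q A p then card (pow_fixes q A p) - 1 choose k else 0)" for p
  have "?lhs = (\<Sum>(L, \<sigma>)\<in>cycle_splits A x. h (cycle_of_list L \<circ> \<sigma>))"
    using sum.reindex_bij_betw[OF bij_betw_cycle_splits[OF assms], of h]
    by (simp add: case_prod_unfold h_def)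
  also have "\<dots> = (\<Sum>L\<in>cycle_lists A x. \<Sum>\<sigma> | \<sigma> permutes (A - set L). h (cycle_of_list L \<circ> \<sigma>))"
    unfolding cycle_splits_def
    by (rule sum.Sigma[symmetric]) (auto simp: finite_cycle_lists assms(1) intro: finite_permutations)
  also have "\<dots> = (\<Sum>L\<in>cycle_lists A x. if length L dvd q then
      \<Sum>j\<le>k. (length L - 1 choose j) * pow_fixes_choose_sum q (A - set L) (k - j) else 0)"
  proof (rule sum.cong[OF refl])
    fix L assume L: "L \<in> cycle_lists A x"
    have "h (cycle_of_list L \<circ> \<sigma>) = (\<Sum>j\<le>k. (length L - 1 choose j) * (card (pow_fixes q (A - set L) \<sigma>) choose (k - j)))"
      if "\<sigma> permutes (A - set L)" "length L dvd q" for \<sigma>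
    proof -
      have "length L \<ge> 1" using L by (cases L) (auto simp: cycle_lists_def)
      then show ?thesis
        using that hd_in_pow_fixes_cycle_comp_iff[OF L] card_pow_fixes_cycle_comp[OF L _ _ assms(1)]
        by (simp add: h_def vandermonde)
    qed
    then show "(\<Sum>\<sigma> | \<sigma> permutes (A - set L). h (cycle_of_list L \<circ> \<sigma>)) = (if length L dvd q then
      \<Sum>j\<le>k. (length L - 1 choose j) * pow_fixes_choose_sum q (A - set L) (k - j) else 0)"
      using hd_in_pow_fixes_cycle_comp_iff[OF L]
      by (auto simp: h_def pow_fixes_choose_sum_def sum_distrib_left intro: sum.swap)
  qed
  also have "\<dots> = (\<Sum>L | L \<in> cycle_lists A x \<and> length L dvd q.
         \<Sum>j\<le>k. (length L - 1 choose j) * pow_fixes_choose_sum q (A - set L) (k - j))"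
    by (simp add: sum.inter_filter[symmetric] finite_cycle_lists assms(1))
  finally show ?thesis .
qed

lemma pow_fixes_choose_sum_Suc:
  assumes "finite A"
  shows "Suc k * pow_fixes_choose_sum q A (Suc k) =
    (\<Sum>x\<in>A. \<Sum>L | L \<in> cycle_lists A x \<and> length L dvd q.
       \<Sum>j\<le>k. (length L - 1 choose j) * pow_fixes_choose_sum q (A - set L) (k - j))"
proof -
  have "Suc k * pow_fixes_choose_sum q A (Suc k) =
      (\<Sum>p | p permutes A. card (pow_fixes q A p) * (card (pow_fixes q A p) - 1 choose k))"
    unfolding pow_fixes_choose_sum_def sum_distrib_left
    by (rule sum.cong[OF refl]) (metis diff_Suc_1 times_binomial_minus1_eq zero_less_Suc)
  also have "\<dots> = (\<Sum>p | p permutes A. \<Sum>x\<in>A.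
      if x \<in> pow_fixes q A p then card (pow_fixes q A p) - 1 choose k else 0)"
    using assms by (simp add: sum.If_cases pow_fixes_def Collect_conj_eq)
  also have "\<dots> = (\<Sum>x\<in>A. \<Sum>p | p permutes A.
      if x \<in> pow_fixes q A p then card (pow_fixes q A p) - 1 choose k else 0)"
    by (rule sum.swap)
  finally show ?thesis using assms by (simp add: sum_pow_fixes_choose_through)
qed

fun Bavg_limit :: "nat \<Rightarrow> nat \<Rightarrow> real" where
  "Bavg_limit q 0 = 1"
| "Bavg_limit q (Suc k) =
    (\<Sum>d | d dvd q. \<Sum>j\<le>k. real ((d - 1) choose j) * Bavg_limit q (k - j)) / real (Suc k)"

lemma card_cycle_lists_length:
  assumes "finite A" "x \<in> A" "1 \<le> d" "d \<le> card A"
  shows "card {L \<in> cycle_lists A x. length L = d} * fact (card A - d) = fact (card A - 1)"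
proof -
  let ?T = "{L. length L = d - 1 \<and> distinct L \<and> set L \<subseteq> A - {x}}"
  have "{L \<in> cycle_lists A x. length L = d} = (#) x ` ?T"
  proof (rule set_eqI)
    fix L
    show "L \<in> {L \<in> cycle_lists A x. length L = d} \<longleftrightarrow> L \<in> (#) x ` ?T"
      using assms(2,3) by (cases L) (auto simp: cycle_lists_def)
  qed
  then have "card {L \<in> cycle_lists A x. length L = d} = card ?T"
    by (simp add: card_image)
  also have "\<dots> = \<Prod>{card (A - {x}) - (d - 1) + 1 .. card (A - {x})}"
    by (rule card_lists_distinct_length_eq) (use assms in auto)
  also have "\<dots> = \<Prod>{Suc (card A - d) .. card A - 1}"
    using assms by (simp add: Suc_diff_le)
  finally show ?thesis
    using fact_eq_fact_times[of "card A - d" "card A - 1"] assms(3) by (simp add: mult.commute)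
qed

lemma sum_cycle_lists_dvd:
  assumes "finite A" "x \<in> A" "q \<ge> 1" "q \<le> card A"
  shows "(\<Sum>L | L \<in> cycle_lists A x \<and> length L dvd q. fact (card A - length L) * f (length L))
    = fact (card A - 1) * (\<Sum>d | d dvd q. f d :: real)"
proof -
  let ?S = "{L. L \<in> cycle_lists A x \<and> length L dvd q}"
  have "(\<Sum>L\<in>?S. fact (card A - length L) * f (length L))
      = (\<Sum>d | d dvd q. \<Sum>L | L \<in> ?S \<and> length L = d. fact (card A - length L) * f (length L))"
    by (rule sum.group[symmetric]) (use assms(3) finite_cycle_lists[OF assms(1), of x] in auto)
  also have "\<dots> = (\<Sum>d | d dvd q. fact (card A - 1) * f d)"
  proof (rule sum.cong[OF refl])
    fix d assume "d \<in> {d. d dvd q}"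
    then have d: "1 \<le> d" "d \<le> card A"
      using assms(3,4) dvd_imp_le[of d q] dvd_pos_nat[of q d] by auto
    have "{L. L \<in> ?S \<and> length L = d} = {L \<in> cycle_lists A x. length L = d}"
      using \<open>d \<in> {d. d dvd q}\<close> by auto
    then have "(\<Sum>L | L \<in> ?S \<and> length L = d. fact (card A - length L) * f (length L))
        = real (card {L \<in> cycle_lists A x. length L = d} * fact (card A - d)) * f d"
      by simp
    then show "(\<Sum>L | L \<in> ?S \<and> length L = d. fact (card A - length L) * f (length L)) = fact (card A - 1) * f d"
      unfolding card_cycle_lists_length[OF assms(1,2) d] by simp
  qed
  finally show ?thesis by (simp add: sum_distrib_left)
qed

lemma pow_fixes_choose_sum_eq:
  assumes "q \<ge> 1" "finite A" "k * q \<le> card A"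
  shows "real (pow_fixes_choose_sum q A k) = fact (card A) * Bavg_limit q k"
  using assms(2,3)
proof (induction k arbitrary: A rule: less_induct)
  case (less k)
  show ?case
  proof (cases k)
    case 0
    then show ?thesis
      using card_permutations[OF refl less.prems(1)] by (simp add: pow_fixes_choose_sum_def)
  next
    case (Suc k')
    let ?m = "card A"
    have "q \<le> ?m" using less.prems(2) Suc by (simp add: order_trans[OF le_add1])
    have IH: "real (pow_fixes_choose_sum q (A - set L) (k' - j)) = fact (?m - length L) * Bavg_limit q (k' - j)"
      if "L \<in> cycle_lists A x" "length L dvd q" for L x j
    proof -
      have "distinct L" "set L \<subseteq> A" using that(1) by (auto simp: cycle_lists_def)
      then have c: "card (A - set L) = ?m - length L"
        using less.prems(1) by (simp add: card_Diff_subset distinct_card)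
      have "length L \<le> q" using that(2) assms(1) by (simp add: dvd_imp_le)
      then have "(k' - j) * q + length L \<le> k' * q + q" by (simp add: add_mono)
      then have "(k' - j) * q \<le> card (A - set L)" using less.prems(2) Suc c by simp
      then show ?thesis using less.IH[of "k' - j" "A - set L"] Suc less.prems(1) c by simp
    qed
    define E where "E d = (\<Sum>j\<le>k'. real ((d - 1) choose j) * Bavg_limit q (k' - j))" for d
    have "real (Suc k' * pow_fixes_choose_sum q A (Suc k'))
        = (\<Sum>x\<in>A. \<Sum>L | L \<in> cycle_lists A x \<and> length L dvd q. \<Sum>j\<le>k'.
             real (length L - 1 choose j) * real (pow_fixes_choose_sum q (A - set L) (k' - j)))"
      unfolding pow_fixes_choose_sum_Suc[OF less.prems(1)] by simp
    also have "\<dots> = (\<Sum>x\<in>A. \<Sum>L | L \<in> cycle_lists A x \<and> length L dvd q. fact (?m - length L) * E (length L))"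
      unfolding E_def sum_distrib_left by (intro sum.cong refl) (auto simp: IH mult_ac)
    also have "\<dots> = real ?m * fact (?m - 1) * (\<Sum>d | d dvd q. E d)"
      using sum_cycle_lists_dvd[OF less.prems(1) _ assms(1) \<open>q \<le> ?m\<close>] by simp
    also have "\<dots> = real (Suc k') * (fact ?m * Bavg_limit q (Suc k'))"
      using \<open>q \<le> ?m\<close> assms(1) by (simp add: E_def fact_reduce)
    finally have "real (Suc k') * real (pow_fixes_choose_sum q A (Suc k'))
        = real (Suc k') * (fact ?m * Bavg_limit q (Suc k'))"
      by (simp only: of_nat_mult)
    then show ?thesis using Suc by (simp only: mult_cancel_left of_nat_eq_0_iff) simp
  qed
qed

lemma Bavg_eq_Bavg_limit:
  assumes "q \<ge> 1" "k * q \<le> n"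
  shows "Bavg n q k = Bavg_limit q k"
proof -
  have "(\<Sum>\<pi> | \<pi> permutes {1..n}. real (c1 n (\<pi> ^^ q) choose k)) = real (pow_fixes_choose_sum q {1..n} k)"
    unfolding pow_fixes_choose_sum_def of_nat_sum by (simp add: c1_def pow_fixes_def)
  then show ?thesis using pow_fixes_choose_sum_eq[OF assms(1), of "{1..n}" k] assms(2)
    by (simp add: Bavg_def)
qed

section \<open>Divisor sums\<close>

definition sigma_nat :: "nat \<Rightarrow> nat \<Rightarrow> real" where
  "sigma_nat j q = (\<Sum>d | d dvd q. real d ^ j)"

definition sigma_norm :: "nat \<Rightarrow> nat \<Rightarrow> real" where
  "sigma_norm j q = (\<Sum>d | d dvd q. (real d / real q) ^ j)"

lemma sigma_of_nat: "q \<ge> 1 \<Longrightarrow> sigma (real j) q = sigma_nat j q"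
  unfolding sigma_def sigma_nat_def
  by (rule sum.cong[OF refl]) (auto simp: powr_realpow dvd_pos_nat)

lemma sigma_nat_0: "sigma_nat 0 q = real (card {d. d dvd q})"
  by (simp add: sigma_nat_def)

lemma sigma_nat_eq_sigma_norm: "q \<ge> 1 \<Longrightarrow> sigma_nat j q = real q ^ j * sigma_norm j q"
  unfolding sigma_nat_def sigma_norm_def sum_distrib_left
  by (rule sum.cong[OF refl]) (simp add: power_divide)

lemma sigma_nat_nonneg: "sigma_nat j q \<ge> 0"
  by (simp add: sigma_nat_def sum_nonneg)

lemma sigma_norm_nonneg: "sigma_norm j q \<ge> 0"
  by (simp add: sigma_norm_def sum_nonneg)

lemma sigma_nat_1_ge:
  assumes "q \<ge> 1"
  shows "real q \<le> sigma_nat 1 q" "real (card {d. d dvd q}) \<le> sigma_nat 1 q"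
proof -
  show "real q \<le> sigma_nat 1 q"
    using member_le_sum[of q "{d. d dvd q}" "\<lambda>d. real d ^ 1"] assms by (simp add: sigma_nat_def)
  have "real (card {d. d dvd q}) = (\<Sum>d | d dvd q. 1)" by simp
  also have "\<dots> \<le> sigma_nat 1 q"
    unfolding sigma_nat_def using assms by (intro sum_mono) (auto simp: dvd_pos_nat Suc_le_eq)
  finally show "real (card {d. d dvd q}) \<le> sigma_nat 1 q" .
qed

lemma card_divisors_pos: "(q::nat) \<ge> 1 \<Longrightarrow> card {d. d dvd q} \<ge> 1"
  using card_gt_0_iff[of "{d. d dvd q}"] dvd_1_left[of q] by (auto simp: Suc_le_eq)

lemma card_sq_le_if_squares_le:
  assumes "finite S" "\<And>d. d \<in> S \<Longrightarrow> 0 < d \<and> d * d \<le> (q::nat)"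
  shows "card S * card S \<le> q"
proof (cases "S = {}")
  case False
  have "S \<subseteq> {1..Max S}" using assms by (auto simp: Suc_le_eq)
  then have "card S \<le> card {1..Max S}" by (rule card_mono[rotated]) simp
  then have "card S \<le> Max S" by simp
  then have "card S * card S \<le> Max S * Max S" using mult_le_mono by blast
  also have "\<dots> \<le> q" using assms(2) Max_in[OF assms(1) False] by blast
  finally show ?thesis .
qed simp

text \<open>The divisors above \<open>\<surd>q\<close> are matched with those below it by \<open>d \<mapsto> q div d\<close>.\<close>

lemma card_divisors_le_twice_small:
  assumes "(q::nat) \<ge> 1"
  shows "card {d. d dvd q} \<le> 2 * card {d. d dvd q \<and> d * d \<le> q}"
proof -
  let ?D = "{d. d dvd q}"
  let ?D1 = "{d \<in> ?D. d * d \<le> q}"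
  let ?D2 = "{d \<in> ?D. q < d * d}"
  have fin: "finite ?D" using assms by simp
  have "?D = ?D1 \<union> ?D2" "?D1 \<inter> ?D2 = {}" by auto
  then have "card ?D = card ?D1 + card ?D2"
    using fin by (metis (no_types, lifting) card_Un_disjoint finite_Un)
  moreover have "card ?D2 \<le> card ?D1"
  proof (rule card_inj_on_le)
    show "inj_on (\<lambda>d. q div d) ?D2"
    proof (rule inj_onI)
      fix a b assume "a \<in> ?D2" "b \<in> ?D2" "q div a = q div b"
      moreover have "d = q div (q div d)" if "d dvd q" for d using that assms by (auto elim!: dvdE)
      ultimately show "a = b" by (metis (no_types, lifting) mem_Collect_eq)
    qed
    show "(\<lambda>d. q div d) ` ?D2 \<subseteq> ?D1"
    proof
      fix e assume "e \<in> (\<lambda>d. q div d) ` ?D2"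
      then obtain d where d: "d dvd q" "q < d * d" "e = q div d" by auto
      then have q: "q = d * e" by simp
      have "e \<le> d"
      proof (rule ccontr)
        assume "\<not> e \<le> d"
        then have "d * d \<le> d * e" by simp
        then show False using d(2) q by simp
      qed
      then show "e \<in> ?D1" using q by (simp add: mult_right_mono)
    qed
    show "finite ?D1" using fin by simp
  qed
  ultimately show ?thesis by simp
qed

lemma card_divisors_sq_le:
  assumes "q \<ge> 1"
  shows "real (card {d. d dvd q}) ^ 2 \<le> 4 * real q"
proof -
  let ?D1 = "{d. d dvd q \<and> d * d \<le> q}"
  have "card ?D1 * card ?D1 \<le> q"
    by (rule card_sq_le_if_squares_le) (use assms dvd_pos_nat in auto)
  then have "(2 * card ?D1) ^ 2 \<le> 4 * q" by (simp add: power2_eq_square)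
  then have "card {d. d dvd q} ^ 2 \<le> 4 * q"
    using power_mono[OF card_divisors_le_twice_small[OF assms], of 2] by simp
  then show ?thesis by (simp flip: of_nat_power of_nat_le_iff)
qed

lemma sigma_norm_0: "sigma_norm 0 q = real (card {d. d dvd q})"
  by (simp add: sigma_norm_def)

lemma divisor_ratio_le_1: "q \<ge> 1 \<Longrightarrow> d dvd q \<Longrightarrow> real d / real q \<le> 1"
  by (simp add: divide_le_eq dvd_imp_le)

lemma sigma_norm_1_le: "q \<ge> 1 \<Longrightarrow> sigma_norm 1 q \<le> real (card {d. d dvd q})"
  using sum_mono[of "{d. d dvd q}" "\<lambda>d. real d / real q" "\<lambda>_. 1"] divisor_ratio_le_1
  by (simp add: sigma_norm_def)

lemma sigma_norm_antimono: "q \<ge> 1 \<Longrightarrow> i \<le> j \<Longrightarrow> sigma_norm j q \<le> sigma_norm i q"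
  unfolding sigma_norm_def by (intro sum_mono power_decreasing) (auto simp: divisor_ratio_le_1)

lemma sum_inverse_squares_le: "n \<ge> 1 \<Longrightarrow> (\<Sum>e = 1..n. 1 / real e ^ 2) \<le> 2 - 1 / real n"
proof (induction n rule: dec_induct)
  case (step n)
  have "1 / (real n + 1) ^ 2 \<le> 1 / (real n * (real n + 1))"
    using step(1) by (intro divide_left_mono) (auto simp: power2_eq_square)
  also have "\<dots> = 1 / real n - 1 / real (Suc n)" using step(1) by (simp add: field_simps)
  finally have "1 / (real n + 1) ^ 2 \<le> 1 / real n - 1 / real (Suc n)" .
  moreover have "(\<Sum>e = 1..Suc n. 1 / real e ^ 2) = (\<Sum>e = 1..n. 1 / real e ^ 2) + 1 / (real n + 1) ^ 2"
    by simp
  ultimately show ?case using step(3) by linarith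
qed simp

lemma sigma_norm_2_le:
  assumes "q \<ge> 1"
  shows "sigma_norm 2 q \<le> 2"
proof -
  let ?D = "{d. d dvd q}"
  have bij: "bij_betw (\<lambda>d. q div d) ?D ?D"
    by (rule bij_betw_byWitness[where f' = "\<lambda>d. q div d"])
       (use assms in \<open>auto elim!: dvdE simp: dvd_div_eq_mult\<close>)
  have "sigma_norm 2 q = (\<Sum>d\<in>?D. 1 / real (q div d) ^ 2)"
    unfolding sigma_norm_def
  proof (rule sum.cong[OF refl])
    fix d assume "d \<in> ?D"
    then obtain e where e: "q = d * e" by auto
    then have "d \<noteq> 0" "e \<noteq> 0" using assms by auto
    then show "(real d / real q) ^ 2 = 1 / real (q div d) ^ 2"
      using e by (simp add: power2_eq_square)
  qed
  also have "\<dots> = (\<Sum>e\<in>?D. 1 / real e ^ 2)"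
    using sum.reindex_bij_betw[OF bij, of "\<lambda>e. 1 / real e ^ 2"] by simp
  also have "\<dots> \<le> (\<Sum>e = 1..q. 1 / real e ^ 2)"
    using assms by (intro sum_mono2) (auto simp: dvd_imp_le dvd_pos_nat Suc_le_eq)
  also have "\<dots> \<le> 2"
    using sum_inverse_squares_le[OF assms] divide_nonneg_nonneg[of 1 "real q"] by linarith
  finally show ?thesis .
qed

lemma sigma_norm_1_sq_le:
  assumes "q \<ge> 1"
  shows "(sigma_norm 1 q) ^ 2 \<le> 2 * real (card {d. d dvd q})"
proof -
  have "(sigma_norm 1 q) ^ 2 \<le> sigma_norm 2 q * card {d. d dvd q}"
    unfolding sigma_norm_def by (simp add: sum_squared_le_sum_of_squares)
  also have "\<dots> \<le> 2 * card {d. d dvd q}"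
    using sigma_norm_2_le[OF assms] by (simp add: mult_right_mono)
  finally show ?thesis by simp
qed

lemma square_le_pow2: "(m::nat) \<ge> 4 \<Longrightarrow> m^2 \<le> 2^m"
proof (induction m rule: dec_induct)
  case base then show ?case by simp
next
  case (step n)
  have "Suc n ^ 2 = n^2 + 2*n + 1" by (simp add: power2_eq_square algebra_simps)
  also have "\<dots> \<le> 2 * n^2"
  proof -
    have "n^2 \<ge> 4 * n" using step(1) by (simp add: power2_eq_square)
    then show ?thesis using step(1) by linarith
  qed
  also have "\<dots> \<le> 2^Suc n" using step(3) by simp
  finally show ?case .
qed

lemma cube_le_pow2: "(m::nat) \<ge> 4 \<Longrightarrow> m^3 \<le> 4 * 2^m"
proof (induction m rule: dec_induct)
  case base then show ?case by simp
next
  case (step n)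
  have "Suc n ^ 3 = n^3 + 3*n^2 + 3*n + 1" by (simp add: power3_eq_cube power2_eq_square algebra_simps)
  also have "\<dots> \<le> 2 * n^3"
  proof -
    have "n^3 = n * n^2" by (simp add: power3_eq_cube power2_eq_square)
    hence "n^3 \<ge> 4 * n^2" using step(1) by (simp add: mult_right_mono)
    moreover have "n^2 \<ge> 4 * n" using step(1) by (simp add: power2_eq_square)
    ultimately show ?thesis using step(1) by linarith
  qed
  also have "\<dots> \<le> 4 * 2^Suc n" using step(3) by simp
  finally show ?case .
qed

lemma square_le_pow2_div_256: "(m::nat) \<ge> 16 \<Longrightarrow> 256 * m^2 \<le> 2^m"
proof (induction m rule: dec_induct)
  case base then show ?case by simp
next
  case (step n)
  have "Suc n ^ 2 = n^2 + 2*n + 1" by (simp add: power2_eq_square algebra_simps)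
  also have "\<dots> \<le> 2 * n^2"
  proof -
    have "n^2 \<ge> 4 * n" using step(1) by (simp add: power2_eq_square)
    then show ?thesis using step(1) by linarith
  qed
  finally have "256 * Suc n ^ 2 \<le> 2 * (256 * n^2)" by simp
  also have "\<dots> \<le> 2^Suc n" using step(3) by simp
  finally show ?case .
qed

text \<open>Here \<open>k \<le> log\<^sub>2 q\<close> while \<open>\<sigma>\<^sub>0(q) \<le> 2\<surd>q\<close>.\<close>

lemma log_times_card_divisors_le:
  assumes "65536 \<le> q" "2 ^ k \<le> q"
  shows "real k * real (card {d. d dvd q}) \<le> real q / 8"
proof -
  have "256 * k ^ 2 \<le> q"
  proof (cases "k \<ge> 16")
    case False
    then have "k ^ 2 \<le> 15 ^ 2" by (intro power_mono) auto
    then show ?thesis using assms(1) by simp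
  qed (use square_le_pow2_div_256 assms(2) in fastforce)
  then have k: "real k ^ 2 \<le> real q / 256" by (simp add: field_simps flip: of_nat_power)
  have "(real k * real (card {d. d dvd q})) ^ 2 \<le> real q / 256 * (4 * real q)"
    unfolding power_mult_distrib
    using k card_divisors_sq_le[of q] assms(1) by (intro mult_mono) auto
  also have "\<dots> = (real q / 8) ^ 2" by (simp add: power2_eq_square)
  finally show ?thesis by (rule power2_le_imp_le) simp
qed

section \<open>A bounded convolution recurrence\<close>

text \<open>Abstracts the majorant \<open>w\<^sub>k\<close> of \<open>k! B\<^sub>k\<close>, normalised as \<open>z k = w\<^sub>k / q\<^bsup>k-1\<^esup>\<close>, with
  \<open>s j = \<sigma>\<^sub>j(q) / q\<^sup>j\<close>, \<open>N = \<sigma>\<^sub>0(q)\<close> and \<open>Q = q\<close>.\<close>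

locale convolution_recurrence =
  fixes s z :: "nat \<Rightarrow> real" and N Q :: real and \<Delta> :: nat
  assumes N_ge_1: "N \<ge> 1" and s_0: "s 0 = N" and N_sq_le: "N\<^sup>2 \<le> 4 * Q"
    and s_1_nonneg: "0 \<le> s 1" and s_1_le: "s 1 \<le> N" and s_1_sq_le: "(s 1)\<^sup>2 \<le> 2 * N"
    and s_ge_2: "\<And>j. j \<ge> 2 \<Longrightarrow> 0 \<le> s j \<and> s j \<le> 2"
    and z_Suc: "\<And>k. z (Suc k) = s k + (\<Sum>j<k. real (k choose j) * s j * z (k - j)) / Q"
    and Q_pos: "Q > 0"
    and index_N_le: "\<And>k. k \<le> \<Delta> \<Longrightarrow> real k * N \<le> Q / 8"
    and pow2_Delta_le: "2 ^ \<Delta> \<le> Q" and Delta_ge_4: "\<Delta> \<ge> 4"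
begin

definition conv :: "nat \<Rightarrow> real" where
  "conv m = (\<Sum>j<m. real (m choose j) * s j * z (m - j))"

lemma z_Suc_conv: "z (Suc k) = s k + conv k / Q"
  by (simp add: z_Suc conv_def)

lemma z_1: "z 1 = N"
  using z_Suc[of 0] s_0 by simp

lemma z_2: "z 2 = s 1 + N * N / Q"
  using z_Suc[of 1] s_0 z_1 by (simp add: numeral_2_eq_2)

lemma N_sq_div_Q_le: "N * N / Q \<le> 4"
  using N_sq_le Q_pos by (simp add: power2_eq_square divide_le_eq)

lemma z_2_nonneg: "z 2 \<ge> 0"
  using z_2 s_1_nonneg N_ge_1 Q_pos by simp

lemma z_3_le: "z 3 \<le> 15"
proof -
  have z3: "z 3 = s 2 + (N * z 2 + 2 * s 1 * N) / Q"
    using z_Suc[of 2] s_0 z_1 by (simp add: numeral_3_eq_3 numeral_2_eq_2 lessThan_Suc)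
  have "N * (N * N / Q) \<le> N * 4"
    by (rule mult_left_mono[OF N_sq_div_Q_le]) (use N_ge_1 in simp)
  also have "\<dots> \<le> Q / 2" using index_N_le[of 1] Delta_ge_4 by simp
  finally have "N * (N * N / Q) \<le> Q / 2" .
  moreover have "N * s 1 \<le> N * N" using s_1_le N_ge_1 by (simp add: mult_left_mono)
  then have "N * s 1 \<le> 4 * Q" using N_sq_le by (simp add: power2_eq_square)
  ultimately have "N * z 2 + 2 * s 1 * N \<le> 12.5 * Q"
    unfolding z_2 by (simp add: algebra_simps)
  then have "(N * z 2 + 2 * s 1 * N) / Q \<le> 12.5"
    using Q_pos by (simp add: divide_le_eq)
  then show ?thesis using z3 s_ge_2[of 2] by linarith
qed

lemma sum_choose_s_le: "(\<Sum>j = 1..n. real (m choose j) * s j) \<le> real m * N + 2 * 2 ^ m"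
proof -
  have "real (m choose j) * s j \<le> (if j = 1 then real m * N else 0) + 2 * real (m choose j)"
    if "j \<ge> 1" for j
  proof (cases "j = 1")
    case True
    then show ?thesis using mult_left_mono[OF s_1_le, of "real m"] by simp
  next
    case False
    then show ?thesis using mult_left_mono[of "s j" 2 "real (m choose j)"] s_ge_2[of j] that by simp
  qed
  then have "(\<Sum>j = 1..n. real (m choose j) * s j)
      \<le> (\<Sum>j = 1..n. (if j = 1 then real m * N else 0) + 2 * real (m choose j))"
    by (intro sum_mono) simp
  also have "\<dots> \<le> real m * N + 2 * (\<Sum>j = 1..n. real (m choose j))"
    using N_ge_1 by (simp add: sum.distrib sum_distrib_left)
  also have "(\<Sum>j = 1..n. real (m choose j)) \<le> (\<Sum>j\<le>m + n. real (m choose j))"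
    by (rule sum_mono2) auto
  also have "\<dots> = (\<Sum>j\<le>m. real (m choose j))"
    by (rule sum.mono_neutral_right) auto
  also have "(\<Sum>j\<le>m. real (m choose j)) = 2 ^ m"
    using choose_row_sum[of m] by (metis of_nat_numeral of_nat_power of_nat_sum)
  finally show ?thesis by simp
qed

lemma conv_term_z_2_le:
  assumes "m \<ge> 3"
  shows "real (m choose (m - 2)) * s (m - 2) * z 2 \<le> 18 * N + real m * N + 6 * 2 ^ m"
proof (cases "m = 3")
  case True
  have "real (m choose (m - 2)) * s (m - 2) * z 2 = 3 * (s 1)\<^sup>2 + 3 * s 1 * (N * N / Q)"
    unfolding z_2 True by (simp add: algebra_simps power2_eq_square)
  also have "\<dots> \<le> 3 * (2 * N) + 3 * N * 4"
    using s_1_sq_le s_1_le s_1_nonneg N_sq_div_Q_le Q_pos by (intro add_mono mult_mono) auto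
  finally have "real (m choose (m - 2)) * s (m - 2) * z 2 \<le> 18 * N" by simp
  moreover have "0 \<le> real m * N" "(0::real) \<le> 6 * 2 ^ m" using N_ge_1 by simp_all
  ultimately show ?thesis by linarith
next
  case False
  then have m4: "m \<ge> 4" using assms by simp
  have "m choose (m - 2) = m choose 2" using binomial_symmetric[of 2 m] assms by simp
  then have choose: "real (m choose (m - 2)) = real m * (real m - 1) / 2"
    using arg_cong[OF times_binomial_minus1_eq[of 2 m], of real] m4 by (simp add: of_nat_diff)
  have "real (m choose (m - 2)) * s (m - 2) * z 2 \<le> real (m choose (m - 2)) * 2 * (s 1 + 4)"
    using s_ge_2[of "m - 2"] m4 z_2_nonneg N_sq_div_Q_le unfolding z_2 by (intro mult_mono) auto
  also have "\<dots> \<le> real m ^ 2 * s 1 + 4 * real m ^ 2"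
    unfolding choose using s_1_nonneg by (simp add: power2_eq_square algebra_simps mult_right_mono)
  finally have z_2_term: "real (m choose (m - 2)) * s (m - 2) * z 2 \<le> real m ^ 2 * s 1 + 4 * real m ^ 2" .
  \<comment> \<open>AM-GM: \<open>m\<^sup>2 s\<^sub>1 \<le> (m\<^sup>3 + m s\<^sub>1\<^sup>2) / 2\<close>.\<close>
  have "0 \<le> real m * (real m - s 1)\<^sup>2" by simp
  then have "real m ^ 2 * s 1 \<le> (real m ^ 3 + real m * (s 1)\<^sup>2) / 2"
    by (simp add: power2_eq_square power3_eq_cube algebra_simps)
  also have "\<dots> \<le> real m ^ 3 / 2 + real m * N"
    using mult_left_mono[OF s_1_sq_le, of "real m"] by simp
  finally have "real m ^ 2 * s 1 \<le> real m ^ 3 / 2 + real m * N" .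
  moreover have "real (m ^ 3) \<le> real (4 * 2 ^ m)" "real (m ^ 2) \<le> real (2 ^ m)"
    using cube_le_pow2[OF m4] square_le_pow2[OF m4] by (simp_all only: of_nat_le_iff)
  then have "real m ^ 3 \<le> 4 * 2 ^ m" "real m ^ 2 \<le> 2 ^ m" by simp_all
  ultimately show ?thesis using z_2_term N_ge_1 by linarith
qed

lemma conv_le:
  assumes "m \<ge> 3" "\<And>j. 3 \<le> j \<Longrightarrow> j \<le> m \<Longrightarrow> z j \<le> 40"
  shows "conv m \<le> 60 * (real (m + 1) * N + 2 ^ (m + 1))"
proof -
  obtain n where n: "m = n + 3" using assms(1) by (metis add.commute le_iff_add)
  define f where "f j = real (m choose j) * s j * z (m - j)" for j
  have "{..<m} = insert 0 {1..n} \<union> {n + 1, n + 2}" using n by auto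
  then have "conv m = f 0 + (\<Sum>j = 1..n. f j) + f (n + 1) + f (n + 2)"
    unfolding conv_def f_def by (simp add: sum.union_disjoint)
  also have "\<dots> \<le> 40 * N + 40 * (real m * N + 2 * 2 ^ m) + (18 * N + real m * N + 6 * 2 ^ m) + 2 * real m * N"
  proof (intro add_mono)
    show "f 0 \<le> 40 * N" unfolding f_def using assms(2)[of m] assms(1) s_0 N_ge_1 by simp
    have "(\<Sum>j = 1..n. f j) \<le> (\<Sum>j = 1..n. real (m choose j) * s j * 40)"
    proof (rule sum_mono)
      fix j assume j: "j \<in> {1..n}"
      have "0 \<le> s j" using s_1_nonneg s_ge_2[of j] j by (cases "j = 1") auto
      moreover have "z (m - j) \<le> 40" using assms(2)[of "m - j"] j n by auto
      ultimately show "f j \<le> real (m choose j) * s j * 40"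
        unfolding f_def by (simp add: mult_left_mono)
    qed
    also have "\<dots> \<le> 40 * (real m * N + 2 * 2 ^ m)"
      using sum_choose_s_le[where n = n and m = m] by (simp add: sum_distrib_right[symmetric])
    finally show "(\<Sum>j = 1..n. f j) \<le> 40 * (real m * N + 2 * 2 ^ m)" .
    show "f (n + 1) \<le> 18 * N + real m * N + 6 * 2 ^ m"
      using conv_term_z_2_le[OF assms(1)] n by (simp add: f_def numeral_2_eq_2 numeral_3_eq_3)
    have "f (n + 2) = real m * s (n + 2) * N"
      unfolding f_def n using z_1 by (simp add: numeral_3_eq_3 binomial_Suc_n)
    then show "f (n + 2) \<le> 2 * real m * N"
      using mult_right_mono[OF mult_left_mono[of "s (n + 2)" 2 "real m"], of N] s_ge_2[of "n + 2"] N_ge_1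
      by simp
  qed
  also have "\<dots> \<le> 60 * (real (m + 1) * N + 2 ^ (m + 1))"
    using N_ge_1 by (simp add: algebra_simps)
  finally show ?thesis .
qed

lemma z_le_40: "3 \<le> k \<Longrightarrow> k < \<Delta> \<Longrightarrow> z k \<le> 40"
proof (induction k rule: less_induct)
  case (less k)
  show ?case
  proof (cases "k = 3")
    case False
    then obtain m where m: "k = Suc m" "m \<ge> 3" using less.prems(1) by (cases k) auto
    have "conv m \<le> 60 * (real (m + 1) * N + 2 ^ (m + 1))"
      by (rule conv_le) (use less m in auto)
    moreover have "real (m + 1) * N \<le> Q / 8" using index_N_le[of "m + 1"] less.prems m by simp
    moreover have "(2::real) ^ (m + 1) * 2 \<le> Q"
      using power_increasing[of "m + 2" \<Delta> "2::real"] less.prems m pow2_Delta_le by simp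
    ultimately have "conv m \<le> 37.5 * Q" by simp
    then have "conv m / Q \<le> 37.5" by (subst pos_divide_le_eq[OF Q_pos])
    then show ?thesis unfolding m(1) using z_Suc_conv[of m] s_ge_2[of m] m(2) by linarith
  qed (use z_3_le in simp)
qed

lemma conv_Delta_le: "conv (\<Delta> - 1) \<le> 60 * (real \<Delta> * N + 2 ^ \<Delta>)"
  using conv_le[of "\<Delta> - 1"] z_le_40 Delta_ge_4 by simp

end

section \<open>Bounds on the limit average\<close>

lemma Bavg_limit_nonneg: "Bavg_limit q k \<ge> 0"
proof (induction k rule: less_induct)
  case (less k)
  then show ?case
    by (cases k) (auto intro!: sum_nonneg mult_nonneg_nonneg divide_nonneg_nonneg)
qed

fun Bavg_majorant :: "nat \<Rightarrow> nat \<Rightarrow> real" where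
  "Bavg_majorant q 0 = 1"
| "Bavg_majorant q (Suc k) = (\<Sum>j\<le>k. real (k choose j) * sigma_nat j q * Bavg_majorant q (k - j))"

text \<open>Bounding \<open>(d - 1 choose j)\<close> by \<open>d\<^sup>j / j!\<close> in the recursion of \<^const>\<open>Bavg_limit\<close>
  yields the recursion of \<^const>\<open>Bavg_majorant\<close>.\<close>

lemma Bavg_limit_le_majorant: "Bavg_limit q k \<le> Bavg_majorant q k / fact k"
proof (induction k rule: less_induct)
  case (less k)
  show ?case
  proof (cases k)
    case (Suc k')
    have "(\<Sum>d | d dvd q. \<Sum>j\<le>k'. real ((d - 1) choose j) * Bavg_limit q (k' - j))
        \<le> (\<Sum>d | d dvd q. \<Sum>j\<le>k'. (real d ^ j / fact j) * (Bavg_majorant q (k' - j) / fact (k' - j)))"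
    proof (intro sum_mono mult_mono)
      fix d j assume "j \<in> {..k'}"
      have "real ((d - 1) choose j) * fact j \<le> real (d - 1) ^ j"
        using binomial_fact_pow[of "d - 1" j] by (metis of_nat_fact of_nat_le_iff of_nat_mult of_nat_power)
      also have "\<dots> \<le> real d ^ j" by (intro power_mono) auto
      finally show "real ((d - 1) choose j) \<le> real d ^ j / fact j" by (simp add: field_simps)
      show "Bavg_limit q (k' - j) \<le> Bavg_majorant q (k' - j) / fact (k' - j)" using less.IH Suc by simp
      show "0 \<le> real d ^ j / fact j" by simp
      show "0 \<le> Bavg_limit q (k' - j)" by (rule Bavg_limit_nonneg)
    qed
    also have "\<dots> = (\<Sum>j\<le>k'. \<Sum>d | d dvd q. (real d ^ j / fact j) * (Bavg_majorant q (k' - j) / fact (k' - j)))"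
      by (rule sum.swap)
    also have "\<dots> = Bavg_majorant q (Suc k') / fact k'"
      unfolding Bavg_majorant.simps sum_divide_distrib
    proof (rule sum.cong[OF refl])
      fix j assume "j \<in> {..k'}"
      then have ratio: "real (k' choose j) / fact k' = 1 / (fact j * fact (k' - j))"
        by (simp add: binomial_fact)
      have "(\<Sum>d | d dvd q. (real d ^ j / fact j) * (Bavg_majorant q (k' - j) / fact (k' - j)))
          = sigma_nat j q * Bavg_majorant q (k' - j) / (fact j * fact (k' - j))"
        by (simp add: sigma_nat_def sum_distrib_right sum_divide_distrib)
      also have "\<dots> = sigma_nat j q * Bavg_majorant q (k' - j) * (real (k' choose j) / fact k')"
        unfolding ratio by simp
      finally show "(\<Sum>d | d dvd q. (real d ^ j / fact j) * (Bavg_majorant q (k' - j) / fact (k' - j))) =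
          real (k' choose j) * sigma_nat j q * Bavg_majorant q (k' - j) / fact k'"
        by (simp add: mult_ac)
    qed
    finally have "Bavg_limit q (Suc k') \<le> Bavg_majorant q (Suc k') / fact k' / real (Suc k')"
      unfolding Bavg_limit.simps by (rule divide_right_mono) simp
    also have "\<dots> = Bavg_majorant q (Suc k') / fact (Suc k')" by (simp add: field_simps)
    finally show ?thesis using Suc by simp
  qed simp
qed

lemma sum_fact_choose_le_Bavg_limit_Suc:
  "(\<Sum>d | d dvd q. real (fact k * ((d - 1) choose k))) \<le> Bavg_limit q (Suc k) * fact (Suc k)"
proof -
  have "real ((d - 1) choose k) \<le> (\<Sum>j\<le>k. real ((d - 1) choose j) * Bavg_limit q (k - j))" for d
    using member_le_sum[of k "{..k}" "\<lambda>j. real ((d - 1) choose j) * Bavg_limit q (k - j)"]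
    by (simp add: Bavg_limit_nonneg)
  then have "(\<Sum>d | d dvd q. real ((d - 1) choose k)) \<le> Bavg_limit q (Suc k) * real (Suc k)"
    by (simp add: sum_mono del: of_nat_Suc)
  from mult_right_mono[OF this, of "fact k"] show ?thesis
    by (simp add: sum_distrib_left mult_ac del: of_nat_Suc)
qed

text \<open>Here \<open>m! (d - 1 choose m) = (d - 1) \<cdots> (d - m)\<close> is a falling factorial.\<close>

lemma fact_choose_pred_bounds:
  assumes "d \<ge> 1"
  shows "real (fact m * ((d - 1) choose m)) \<le> real d ^ m \<and>
    real d ^ m - real (fact m * ((d - 1) choose m)) \<le> real m * (real m + 1) / 2 * real d ^ m / real d"
proof (induction m)
  case (Suc m)
  define P where "P = real (fact m * ((d - 1) choose m))"
  have "fact (Suc m) * ((d - 1) choose Suc m) = (fact m :: nat) * (Suc m * ((d - 1) choose Suc m))"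
    by (metis fact_Suc mult.assoc mult.commute of_nat_id)
  also have "Suc m * ((d - 1) choose Suc m) = (d - 1 - m) * ((d - 1) choose m)"
    by (metis binomial_absorption binomial_absorb_comp)
  finally have step: "real (fact (Suc m) * ((d - 1) choose Suc m)) = P * real (d - 1 - m)"
    unfolding P_def by (simp only: mult_ac of_nat_mult)
  have P: "0 \<le> P" "P \<le> real d ^ m" "real d ^ m - P \<le> real m * (real m + 1) / 2 * real d ^ m / real d"
    using Suc by (simp_all add: P_def)
  have "P * real (d - 1 - m) \<le> real d ^ m * real d" by (intro mult_mono) (use P in auto)
  then have upper: "P * real (d - 1 - m) \<le> real d ^ Suc m" by (simp add: algebra_simps)
  have "real d ^ Suc m - P * real (d - 1 - m) \<le> real d * (real d ^ m - P) + (real m + 1) * P"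
    using mult_left_mono[of "real d - (real m + 1)" "real (d - 1 - m)" P] P(1) assms
    by (simp add: algebra_simps of_nat_diff)
  also have "\<dots> \<le> real d * (real m * (real m + 1) / 2 * real d ^ m / real d) + (real m + 1) * real d ^ m"
    using P by (intro add_mono mult_left_mono) auto
  also have "\<dots> = real (Suc m) * (real (Suc m) + 1) / 2 * real d ^ Suc m / real d"
    using assms by (simp add: field_simps)
  finally show ?case using upper step by simp
qed simp

lemma Bavg_limit_lower:
  assumes "q \<ge> 1" "\<Delta> \<ge> 4"
  shows "sigma_nat (\<Delta> - 1) q - Bavg_limit q \<Delta> * fact \<Delta> \<le> 2 ^ \<Delta> * real q ^ (\<Delta> - 2)"
proof -
  let ?m = "\<Delta> - 1"
  have \<Delta>: "\<Delta> = Suc ?m" "?m = Suc (\<Delta> - 2)" using assms(2) by simp_all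
  have below: "(\<Sum>d | d dvd q. real (fact ?m * ((d - 1) choose ?m))) \<le> Bavg_limit q \<Delta> * fact \<Delta>"
    using sum_fact_choose_le_Bavg_limit_Suc[where q = q and k = ?m] by (simp only: \<Delta>(1)[symmetric])
  have gap: "sigma_nat ?m q - (\<Sum>d | d dvd q. real (fact ?m * ((d - 1) choose ?m)))
      \<le> real ?m * (real ?m + 1) / 2 * sigma_nat (\<Delta> - 2) q"
  proof -
    have "real d ^ ?m - real (fact ?m * ((d - 1) choose ?m)) \<le> real ?m * (real ?m + 1) / 2 * real d ^ (\<Delta> - 2)"
      if "d dvd q" for d
    proof -
      have "d \<ge> 1" using that assms(1) dvd_pos_nat by fastforce
      then have "real d ^ ?m / real d = real d ^ (\<Delta> - 2)" by (subst \<Delta>(2)) simp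
      then show ?thesis
        using conjunct2[OF fact_choose_pred_bounds[OF \<open>d \<ge> 1\<close>, of ?m]] by (metis times_divide_eq_right)
    qed
    then show ?thesis
      unfolding sigma_nat_def sum_distrib_left sum_subtractf[symmetric] by (intro sum_mono) auto
  qed
  have "2 \<le> \<Delta> - 2" using assms(2) by simp
  then have "sigma_norm (\<Delta> - 2) q \<le> 2"
    using sigma_norm_antimono[OF assms(1)] sigma_norm_2_le[OF assms(1)] by (meson order_trans)
  then have sigma: "sigma_nat (\<Delta> - 2) q \<le> 2 * real q ^ (\<Delta> - 2)"
    unfolding sigma_nat_eq_sigma_norm[OF assms(1)] by (simp add: mult_right_mono mult.commute)
  have "real ?m * (real ?m + 1) \<le> real (\<Delta> ^ 2)"
    using assms(2) by (simp add: power2_eq_square of_nat_diff mult_right_mono)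
  also have "\<dots> \<le> 2 ^ \<Delta>" using square_le_pow2[OF assms(2)] by (simp flip: of_nat_power)
  finally have pow2: "real ?m * (real ?m + 1) \<le> 2 ^ \<Delta>" .
  have "sigma_nat ?m q - Bavg_limit q \<Delta> * fact \<Delta> \<le> real ?m * (real ?m + 1) / 2 * sigma_nat (\<Delta> - 2) q"
    using below gap by linarith
  also have "\<dots> \<le> real ?m * (real ?m + 1) / 2 * (2 * real q ^ (\<Delta> - 2))"
    by (rule mult_left_mono[OF sigma]) simp
  also have "\<dots> = real ?m * (real ?m + 1) * real q ^ (\<Delta> - 2)" by simp
  also have "\<dots> \<le> 2 ^ \<Delta> * real q ^ (\<Delta> - 2)" by (rule mult_right_mono[OF pow2]) simp
  finally show ?thesis .
qed

lemma Bavg_majorant_scaled_Suc: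
  assumes "q \<ge> 1"
  defines "z \<equiv> \<lambda>k. Bavg_majorant q k / real q ^ (k - 1)"
  shows "z (Suc k) = sigma_norm k q + (\<Sum>j<k. real (k choose j) * sigma_norm j q * z (k - j)) / real q"
proof -
  have q: "real q > 0" using assms(1) by simp
  have "Bavg_majorant q (Suc k) = (\<Sum>j<k. real (k choose j) * sigma_nat j q * Bavg_majorant q (k - j)) + sigma_nat k q"
    by (simp add: lessThan_Suc_atMost[symmetric])
  moreover have "real (k choose j) * sigma_nat j q * Bavg_majorant q (k - j) / real q ^ k
      = real (k choose j) * sigma_norm j q * z (k - j) / real q" if "j < k" for j
  proof -
    have "real q ^ k = real q ^ j * real q ^ (k - j - 1) * real q"
      using that by (simp flip: power_add power_Suc2)
    then show ?thesis
      unfolding sigma_nat_eq_sigma_norm[OF assms(1)] z_def using q by (simp add: field_simps diff_diff_left)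
  qed
  ultimately show ?thesis
    using q by (simp add: z_def add_divide_distrib sum_divide_distrib sigma_nat_eq_sigma_norm[OF assms(1)])
qed

lemma Bavg_limit_upper:
  assumes "65536 \<le> q" "2 ^ \<Delta> \<le> q" "\<Delta> \<ge> 4"
  shows "Bavg_limit q \<Delta> * fact \<Delta> - sigma_nat (\<Delta> - 1) q
    \<le> 60 * real q ^ (\<Delta> - 2) * (real \<Delta> * real (card {d. d dvd q}) + 2 ^ \<Delta>)"
proof -
  let ?N = "real (card {d. d dvd q})"
  define z where "z k = Bavg_majorant q k / real q ^ (k - 1)" for k
  have q: "q \<ge> 1" "real q > 0" using assms(1) by simp_all
  interpret convolution_recurrence "\<lambda>j. sigma_norm j q" z ?N "real q" \<Delta>
  proof
    show "\<And>k. z (Suc k) = sigma_norm k q + (\<Sum>j<k. real (k choose j) * sigma_norm j q * z (k - j)) / real q"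
      using Bavg_majorant_scaled_Suc[OF q(1)] unfolding z_def by simp
    show "\<And>j. j \<ge> 2 \<Longrightarrow> 0 \<le> sigma_norm j q \<and> sigma_norm j q \<le> 2"
      using sigma_norm_nonneg sigma_norm_antimono[OF q(1)] sigma_norm_2_le[OF q(1)] by (meson order.trans)
    show "\<And>k. k \<le> \<Delta> \<Longrightarrow> real k * ?N \<le> real q / 8"
      using log_times_card_divisors_le[OF assms(1)] assms(2)
      by (meson order.trans one_le_numeral power_increasing)
    show "2 ^ \<Delta> \<le> real q" using assms(2) by (simp flip: of_nat_power)
  qed (use q card_divisors_pos[OF q(1)] card_divisors_sq_le[OF q(1)] sigma_norm_0 sigma_norm_nonneg
      sigma_norm_1_le sigma_norm_1_sq_le assms(3) in auto)
  have \<Delta>: "\<Delta> = Suc (\<Delta> - 1)" "\<Delta> - 1 = Suc (\<Delta> - 2)" using assms(3) by simp_all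
  have "Bavg_majorant q \<Delta> = real q ^ (\<Delta> - 1) * z \<Delta>" using q by (simp add: z_def)
  also have "\<dots> = real q ^ (\<Delta> - 1) * (sigma_norm (\<Delta> - 1) q + conv (\<Delta> - 1) / real q)"
    using z_Suc_conv[of "\<Delta> - 1"] \<Delta>(1) by simp
  also have "\<dots> = sigma_nat (\<Delta> - 1) q + real q ^ (\<Delta> - 2) * conv (\<Delta> - 1)"
    using q power_Suc2[of "real q" "\<Delta> - 2"] \<Delta>(2)
    by (simp add: sigma_nat_eq_sigma_norm field_simps)
  also have "\<dots> \<le> sigma_nat (\<Delta> - 1) q + real q ^ (\<Delta> - 2) * (60 * (real \<Delta> * ?N + 2 ^ \<Delta>))"
    using conv_Delta_le by (simp add: mult_left_mono)
  also have "\<dots> = sigma_nat (\<Delta> - 1) q + 60 * real q ^ (\<Delta> - 2) * (real \<Delta> * ?N + 2 ^ \<Delta>)"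
    by (simp only: mult_ac)
  finally have "Bavg_majorant q \<Delta> \<le> \<dots>" .
  moreover have "Bavg_limit q \<Delta> * fact \<Delta> \<le> Bavg_majorant q \<Delta>"
    using Bavg_limit_le_majorant[of q \<Delta>] by (simp add: field_simps)
  ultimately show ?thesis by linarith
qed

lemma Bavg_limit_approx:
  assumes "65536 \<le> q" "2 ^ \<Delta> \<le> q" "\<Delta> \<ge> 4"
  shows "\<bar>Bavg_limit q \<Delta> - sigma_nat (\<Delta> - 1) q / fact \<Delta>\<bar>
    \<le> 60 * (1 / fact \<Delta>) * real q ^ (\<Delta> - 2) * (real \<Delta> * real (card {d. d dvd q}) + 2 ^ \<Delta>)"
proof -
  let ?X = "60 * real q ^ (\<Delta> - 2) * (real \<Delta> * real (card {d. d dvd q}) + 2 ^ \<Delta>)"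
  have "2 ^ \<Delta> \<le> 60 * (real \<Delta> * real (card {d. d dvd q}) + 2 ^ \<Delta>)" by simp
  then have "2 ^ \<Delta> * real q ^ (\<Delta> - 2) \<le> 60 * (real \<Delta> * real (card {d. d dvd q}) + 2 ^ \<Delta>) * real q ^ (\<Delta> - 2)"
    by (rule mult_right_mono) simp
  then have "2 ^ \<Delta> * real q ^ (\<Delta> - 2) \<le> ?X" by (simp only: mult_ac)
  then have "\<bar>Bavg_limit q \<Delta> * fact \<Delta> - sigma_nat (\<Delta> - 1) q\<bar> \<le> ?X"
    using Bavg_limit_upper[OF assms] Bavg_limit_lower[of q \<Delta>] assms by linarith
  then have "\<bar>Bavg_limit q \<Delta> * fact \<Delta> - sigma_nat (\<Delta> - 1) q\<bar> / fact \<Delta> \<le> ?X / fact \<Delta>"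
    by (simp add: divide_right_mono)
  then show ?thesis by (simp add: field_simps)
qed

lemma Bavg_limit_1: "Bavg_limit q 1 = real (card {d. d dvd q})"
  by (simp add: One_nat_def)

lemma Bavg_limit_2:
  assumes "q \<ge> 1"
  shows "Bavg_limit q 2 = (real (card {d. d dvd q}) ^ 2 + sigma_nat 1 q - real (card {d. d dvd q})) / 2"
proof -
  let ?N = "real (card {d. d dvd q})"
  have "(\<Sum>j\<le>1. real ((d - 1) choose j) * Bavg_limit q (1 - j)) = ?N + (real d - 1)" if "d dvd q" for d
    using that assms dvd_pos_nat[of q d] by (simp add: atMost_Suc of_nat_diff Bavg_limit_1)
  then have "(\<Sum>d | d dvd q. \<Sum>j\<le>1. real ((d - 1) choose j) * Bavg_limit q (1 - j))
      = (\<Sum>d | d dvd q. ?N + (real d - 1))"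
    by (intro sum.cong) auto
  also have "\<dots> = ?N ^ 2 + sigma_nat 1 q - ?N"
    by (simp add: sum.distrib sum_subtractf sigma_nat_def power2_eq_square)
  finally show ?thesis by (simp add: numeral_2_eq_2)
qed

lemma Bavg_limit_3:
  assumes "q \<ge> 1"
  shows "Bavg_limit q 3 = (real (card {d. d dvd q}) * Bavg_limit q 2
    + (sigma_nat 1 q - real (card {d. d dvd q})) * real (card {d. d dvd q})
    + (sigma_nat 2 q - 3 * sigma_nat 1 q + 2 * real (card {d. d dvd q})) / 2) / 3"
proof -
  let ?N = "real (card {d. d dvd q})"
  have "(\<Sum>j\<le>2. real ((d - 1) choose j) * Bavg_limit q (2 - j))
      = Bavg_limit q 2 + (real d - 1) * ?N + (real d ^ 2 - 3 * real d + 2) / 2" if "d dvd q" for d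
  proof -
    have d: "d \<ge> 1" using that assms dvd_pos_nat[of q d] by simp
    have "2 * real ((d - 1) choose 2) = (real d - 1) * (real d - 2)"
      using arg_cong[OF times_binomial_minus1_eq[of 2 "d - 1"], of real] d
      by (cases "d = 1") (simp_all add: of_nat_diff)
    then show ?thesis
      using d by (simp add: numeral_2_eq_2 atMost_Suc of_nat_diff Bavg_limit_1 algebra_simps power2_eq_square)
  qed
  then have "(\<Sum>d | d dvd q. \<Sum>j\<le>2. real ((d - 1) choose j) * Bavg_limit q (2 - j))
      = (\<Sum>d | d dvd q. (Bavg_limit q 2 - ?N + 1) + (?N - 3 / 2) * real d + 1 / 2 * real d ^ 2)"
    by (intro sum.cong) (auto simp: field_simps)
  also have "\<dots> = ?N * (Bavg_limit q 2 - ?N + 1) + (?N - 3 / 2) * sigma_nat 1 q + 1 / 2 * sigma_nat 2 q"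
    by (simp add: sum.distrib sum_distrib_left sigma_nat_def)
  finally show ?thesis by (simp add: numeral_3_eq_3 numeral_2_eq_2 field_simps)
qed

lemma Bavg_limit_2_approx:
  assumes "q \<ge> 1"
  shows "\<bar>Bavg_limit q 2 - sigma_nat 1 q / 2\<bar> \<le> real (card {d. d dvd q}) ^ 2 / 2"
  using card_divisors_pos[OF assms] by (simp add: Bavg_limit_2[OF assms] field_simps power2_eq_square)

lemma Bavg_limit_3_approx:
  assumes "q \<ge> 1"
  shows "\<bar>Bavg_limit q 3 - sigma_nat 2 q / 6\<bar> \<le> 2 * real (card {d. d dvd q}) * sigma_nat 1 q"
proof -
  let ?N = "real (card {d. d dvd q})"
  let ?s = "sigma_nat 1 q"
  have N: "1 \<le> ?N" using card_divisors_pos[OF assms] by simp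
  have s: "?N \<le> ?s" "real q \<le> ?s" using sigma_nat_1_ge[OF assms] by auto
  have e: "Bavg_limit q 3 - sigma_nat 2 q / 6 = ?N ^ 3 / 6 + ?N * ?s / 2 - ?N ^ 2 / 2 - ?s / 2 + ?N / 3"
    unfolding Bavg_limit_3[OF assms] Bavg_limit_2[OF assms]
    by (simp add: field_simps power2_eq_square power3_eq_cube)
  have "?N ^ 3 \<le> 4 * (?N * ?s)"
    using mult_left_mono[OF order_trans[OF card_divisors_sq_le[OF assms]], of "4 * ?s" ?N] s N
    by (simp add: power2_eq_square power3_eq_cube mult_ac)
  moreover have "?N ^ 2 \<le> ?N * ?s" "?s \<le> ?N * ?s" "?N \<le> ?N * ?s"
    using N s mult_left_mono[of ?N ?s ?N] mult_right_mono[of 1 ?N ?s] mult_left_mono[of 1 ?s ?N]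
    by (simp_all add: power2_eq_square)
  moreover have "0 \<le> ?N ^ 2" "0 \<le> ?N ^ 3" by simp_all
  ultimately show ?thesis unfolding e abs_le_iff mult.assoc using N s by (intro conjI) linarith+
qed

lemma pow2_le_of_le_log:
  assumes "q \<ge> 1" "real k \<le> ln (real q) / ln 2"
  shows "2 ^ k \<le> q"
proof -
  have "ln (2 ^ k) \<le> ln (real q)" using assms(2) by (simp add: ln_realpow pos_le_divide_eq)
  then have "(2::real) ^ k \<le> real q" using assms(1) by (subst (asm) ln_le_cancel_iff) auto
  then show ?thesis by (simp flip: of_nat_le_iff)
qed

theorem proposition5p3:
  "\<exists>(q0::nat) (C::real). C > 0 \<and>
    (\<forall>(q::nat) (\<Delta>::nat) (n::nat).
       q \<ge> q0 \<and> q \<ge> 1 \<and> \<Delta> \<ge> 1 \<and> real \<Delta> \<le> ln (real q) / ln 2 \<and> n \<ge> \<Delta> * q \<longrightarrow>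
       (\<Delta> = 1 \<longrightarrow> Bavg n q \<Delta> = sigma 0 q) \<and>
       (\<Delta> = 2 \<longrightarrow> \<bar>Bavg n q \<Delta> - sigma 1 q / 2\<bar> \<le> C * (sigma 0 q)^2) \<and>
       (\<Delta> = 3 \<longrightarrow> \<bar>Bavg n q \<Delta> - sigma 2 q / 6\<bar> \<le> C * sigma 0 q * sigma 1 q) \<and>
       (\<Delta> \<ge> 4 \<longrightarrow> \<bar>Bavg n q \<Delta> - sigma (real \<Delta> - 1) q / fact \<Delta>\<bar>
            \<le> C * (1 / fact \<Delta>) * real q ^ (\<Delta> - 2) * (real \<Delta> * sigma 0 q + 2 ^ \<Delta>)))"
proof (intro exI[of _ "65536::nat"] exI[of _ "60::real"] conjI allI impI)
  fix q \<Delta> n :: nat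
  assume "q \<ge> 65536 \<and> q \<ge> 1 \<and> \<Delta> \<ge> 1 \<and> real \<Delta> \<le> ln (real q) / ln 2 \<and> n \<ge> \<Delta> * q"
  then have q: "65536 \<le> q" "q \<ge> 1" and "\<Delta> \<ge> 1" and pow2: "2 ^ \<Delta> \<le> q"
    and B: "Bavg n q \<Delta> = Bavg_limit q \<Delta>"
    using pow2_le_of_le_log Bavg_eq_Bavg_limit by auto
  have sigma: "sigma 0 q = real (card {d. d dvd q})" "sigma 1 q = sigma_nat 1 q"
    "sigma 2 q = sigma_nat 2 q" "sigma (real \<Delta> - 1) q = sigma_nat (\<Delta> - 1) q"
    using sigma_of_nat[OF q(2), of 0] sigma_of_nat[OF q(2), of 1] sigma_of_nat[OF q(2), of 2]
      sigma_of_nat[OF q(2), of "\<Delta> - 1"] sigma_nat_0 \<open>\<Delta> \<ge> 1\<close>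
    by (simp_all add: of_nat_diff)
  show "\<Delta> = 1 \<Longrightarrow> Bavg n q \<Delta> = sigma 0 q"
    using B sigma Bavg_limit_1 by simp
  have half: "real (card {d. d dvd q}) ^ 2 / 2 \<le> 60 * real (card {d. d dvd q}) ^ 2" by simp
  show "\<Delta> = 2 \<Longrightarrow> \<bar>Bavg n q \<Delta> - sigma 1 q / 2\<bar> \<le> 60 * (sigma 0 q)^2"
    using B sigma order_trans[OF Bavg_limit_2_approx[OF q(2)] half] by simp
  show "\<Delta> = 3 \<Longrightarrow> \<bar>Bavg n q \<Delta> - sigma 2 q / 6\<bar> \<le> 60 * sigma 0 q * sigma 1 q"
    using B sigma Bavg_limit_3_approx[OF q(2)] sigma_nat_nonneg[of 1 q] by simp
  show "\<Delta> \<ge> 4 \<Longrightarrow> \<bar>Bavg n q \<Delta> - sigma (real \<Delta> - 1) q / fact \<Delta>\<bar>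
      \<le> 60 * (1 / fact \<Delta>) * real q ^ (\<Delta> - 2) * (real \<Delta> * sigma 0 q + 2 ^ \<Delta>)"
    using B sigma Bavg_limit_approx[OF q(1) pow2] by simp
qed simp

end
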